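(* Let $k$ be a number field and let $u_1,u_2,u_3\in k$ be such that $0,u_1,u_2,u_3$ are pairwise distinct. Then there are infinitely many general Huff curves $$G_{a,b}:\ x(ay^2-1)=y(bx^2-1),\qquad a,b\in k,\ ab(a-b)\neq0,$$ such that each of $0,u_1,u_2,u_3$ is the $x$-coordinate of a point of $G_{a,b}(k)$. *)

theory Defs
  imports Complex_Main
begin

text \<open>A number field, realised (up to isomorphism) as a subfield of the complex
numbers that is finite-dimensional as a vector space over the rationals.\<close>
definition number_field :: "complex set \<Rightarrow> bool" where
  "number_field K \<longleftrightarrow>
     0 \<in> K \<and> 1 \<in> K \<and>
     (\<forall>x\<in>K. \<forall>y\<in>K. x + y \<in> K \<and> x * y \<in> K) \<and>
     (\<forall>x\<in>K. - x \<in> K) \<and>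
     (\<forall>x\<in>K. x \<noteq> 0 \<longrightarrow> inverse x \<in> K) \<and>
     (\<exists>B. finite B \<and> B \<subseteq> K \<and>
        (\<forall>x\<in>K. \<exists>c :: complex \<Rightarrow> rat. x = (\<Sum>b\<in>B. of_rat (c b) * b)))"

definition on_huff :: "complex \<Rightarrow> complex \<Rightarrow> complex \<Rightarrow> complex \<Rightarrow> bool" where
  "on_huff a b x y \<longleftrightarrow> x * (a * y^2 - 1) = y * (b * x^2 - 1)"

end

theory Submission
  imports Defs "HOL-Computational_Algebra.Polynomial"
begin

text \<open>Let \<open>s\<^sub>1, s\<^sub>2, s\<^sub>3\<close> be the elementary symmetric functions of
  \<open>u\<^sub>1, u\<^sub>2, u\<^sub>3\<close>, \<open>E = s\<^sub>1/s\<^sub>3\<close> and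
  \<open>D(t) = 1 - s\<^sub>2 t + s\<^sub>1 s\<^sub>3 t\<^sup>2 - s\<^sub>3\<^sup>2 t\<^sup>3\<close>.
  For \<open>a = (E - t) D(t)\<close> and \<open>b = E - 2t\<close>, substituting
  \<open>x = u, y = (u - t s\<^sub>3)/D(t)\<close> into the equation of \<open>G\<^sub>a\<^sub>,\<^sub>b\<close> and clearing
  denominators leaves \<open>t s\<^sub>3 (u - u\<^sub>1)(u - u\<^sub>2)(u - u\<^sub>3)\<close>, so each \<open>u\<^sub>i\<close> is an
  abscissa of a \<open>k\<close>-point, and \<open>(0, 0)\<close> lies on every Huff curve. The conditions
  \<open>D(t) a b (a - b) \<noteq> 0\<close> fail only at the finitely many roots of a nonzero polynomial
  in \<open>t\<close>, and \<open>b\<close> determines \<open>t\<close>; so the natural numbers \<open>t\<close> give infinitely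
  many curves.\<close>

lemma number_field_zero: "number_field K \<Longrightarrow> 0 \<in> K"
  and number_field_one: "number_field K \<Longrightarrow> 1 \<in> K"
  and number_field_add: "number_field K \<Longrightarrow> x \<in> K \<Longrightarrow> y \<in> K \<Longrightarrow> x + y \<in> K"
  and number_field_mult: "number_field K \<Longrightarrow> x \<in> K \<Longrightarrow> y \<in> K \<Longrightarrow> x * y \<in> K"
  and number_field_uminus: "number_field K \<Longrightarrow> x \<in> K \<Longrightarrow> - x \<in> K"
  and number_field_inverse: "number_field K \<Longrightarrow> x \<in> K \<Longrightarrow> inverse x \<in> K"
  unfolding number_field_def by (auto simp del: inverse_eq_divide)

lemma number_field_diff: "number_field K \<Longrightarrow> x \<in> K \<Longrightarrow> y \<in> K \<Longrightarrow> x - y \<in> K"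
  by (metis diff_conv_add_uminus number_field_add number_field_uminus)

lemma number_field_divide: "number_field K \<Longrightarrow> x \<in> K \<Longrightarrow> y \<in> K \<Longrightarrow> x / y \<in> K"
  by (metis divide_inverse number_field_inverse number_field_mult)

lemma number_field_power: "number_field K \<Longrightarrow> x \<in> K \<Longrightarrow> x ^ n \<in> K"
  by (induction n) (auto intro: number_field_one number_field_mult)

lemma number_field_of_nat: "number_field K \<Longrightarrow> of_nat n \<in> K"
  by (induction n) (auto intro: number_field_zero number_field_one number_field_add)

lemma number_field_poly:
  assumes "number_field K" "\<And>i. coeff p i \<in> K" "x \<in> K"
  shows "poly p x \<in> K"
  using assms(2)
proof (induction p rule: pCons_induct)
  case 0
  then show ?case using assms(1) by simp
next
  case (pCons a p)
  have "a \<in> K" "\<And>i. coeff p i \<in> K"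
    using pCons.prems[of 0] pCons.prems[of "Suc _"] by simp_all
  then show ?case
    using pCons.IH assms(1,3) by (simp add: number_field_add number_field_mult)
qed

lemma number_field_coeff_pCons:
  "number_field K \<Longrightarrow> a \<in> K \<Longrightarrow> (\<And>j. coeff p j \<in> K) \<Longrightarrow> coeff (pCons a p) i \<in> K"
  by (cases i) simp_all

lemma infinite_if_cofinitely_many_nat:
  fixes g :: "nat \<Rightarrow> 'a"
  assumes "inj g" "finite {n. g n \<notin> S}"
  shows "infinite S"
proof
  assume "finite S"
  then have "finite (g -` S)" using \<open>inj g\<close> by (rule finite_vimageI)
  then have "finite (g -` S \<union> {n. g n \<notin> S})" using assms(2) by blast
  moreover have "g -` S \<union> {n. g n \<notin> S} = UNIV" by blast
  ultimately show False by simp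
qed

lemma finite_nat_roots:
  fixes p :: "'a :: {idom, ring_char_0} poly"
  assumes "p \<noteq> 0"
  shows "finite {n :: nat. poly p (of_nat n) = 0}"
  using finite_vimageI[OF poly_roots_finite[OF assms] inj_of_nat] by (simp add: vimage_def)

definition huff_denom :: "complex \<Rightarrow> complex \<Rightarrow> complex \<Rightarrow> complex poly" where
  "huff_denom u1 u2 u3 =
     [:1, -(u1*u2 + u1*u3 + u2*u3), (u1+u2+u3) * (u1*u2*u3), -((u1*u2*u3)^2):]"

definition huff_a_poly :: "complex \<Rightarrow> complex \<Rightarrow> complex \<Rightarrow> complex poly" where
  "huff_a_poly u1 u2 u3 = [:(u1+u2+u3) / (u1*u2*u3), -1:] * huff_denom u1 u2 u3"

definition huff_b_poly :: "complex \<Rightarrow> complex \<Rightarrow> complex \<Rightarrow> complex poly" where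
  "huff_b_poly u1 u2 u3 = [:(u1+u2+u3) / (u1*u2*u3), -2:]"

lemma on_huff_origin: "on_huff a b 0 0"
  by (simp add: on_huff_def)

lemma on_huff_huff_polys:
  fixes u u1 u2 u3 t :: complex
  assumes "u1*u2*u3 \<noteq> 0" "poly (huff_denom u1 u2 u3) t \<noteq> 0"
    and "(u - u1) * (u - u2) * (u - u3) = 0"
  shows "on_huff (poly (huff_a_poly u1 u2 u3) t) (poly (huff_b_poly u1 u2 u3) t) u
           ((u - t * (u1*u2*u3)) / poly (huff_denom u1 u2 u3) t)"
proof -
  define s1 s2 s3 where "s1 = u1+u2+u3" and "s2 = u1*u2 + u1*u3 + u2*u3" and "s3 = u1*u2*u3"
  define E D w where "E = s1 / s3" and "D = poly (huff_denom u1 u2 u3) t" and "w = u - t * s3"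
  have s3: "s3 \<noteq> 0" and D: "D \<noteq> 0" using assms(1,2) by (simp_all add: s3_def D_def)
  have D_eq: "D = 1 - s2 * t + s1 * s3 * t^2 - s3^2 * t^3"
    by (simp add: D_def huff_denom_def s1_def s2_def s3_def algebra_simps power2_eq_square
        power3_eq_cube)
  have "s3 * D * (u * ((E - t) * D * (w / D)^2 - 1) - (w / D) * ((E - 2*t) * u^2 - 1))
      = u * (s1 - t*s3) * w^2 - u * D * s3 - w * ((s1 - 2*t*s3) * u^2 - s3)"
    using s3 D by (simp add: E_def field_simps power2_eq_square)
  also have "\<dots> = t * s3 * ((u - u1) * (u - u2) * (u - u3))"
    unfolding D_eq w_def s1_def s2_def s3_def by algebra
  also have "\<dots> = 0" using assms(3) by simp
  finally have "u * ((E - t) * D * (w / D)^2 - 1) = (w / D) * ((E - 2*t) * u^2 - 1)"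
    using s3 D by simp
  moreover have "poly (huff_a_poly u1 u2 u3) t = (E - t) * D"
    and "poly (huff_b_poly u1 u2 u3) t = E - 2*t"
    by (simp_all add: huff_a_poly_def huff_b_poly_def E_def D_def s1_def s3_def algebra_simps)
  ultimately show ?thesis
    by (simp add: on_huff_def D_def w_def s3_def)
qed

lemma huff_polys_nonzero:
  assumes "u1*u2*u3 \<noteq> 0"
  shows "huff_denom u1 u2 u3 * huff_a_poly u1 u2 u3 * huff_b_poly u1 u2 u3
           * (huff_a_poly u1 u2 u3 - huff_b_poly u1 u2 u3) \<noteq> 0"
proof -
  define E where "E = (u1+u2+u3) / (u1*u2*u3)"
  have denom: "huff_denom u1 u2 u3 \<noteq> 0" "degree (huff_denom u1 u2 u3) = 3"
    using assms by (simp_all add: huff_denom_def)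
  have "degree (huff_a_poly u1 u2 u3) = 4"
    using degree_mult_eq[of "[:E, -1:]" "huff_denom u1 u2 u3"] denom
    by (simp add: huff_a_poly_def E_def)
  moreover have "degree (huff_b_poly u1 u2 u3) = 1" by (simp add: huff_b_poly_def)
  ultimately have "huff_a_poly u1 u2 u3 - huff_b_poly u1 u2 u3 \<noteq> 0"
    by auto
  moreover have "huff_b_poly u1 u2 u3 \<noteq> 0" by (simp add: huff_b_poly_def)
  ultimately show ?thesis
    using denom \<open>degree (huff_a_poly u1 u2 u3) = 4\<close> by auto
qed

lemma number_field_huff_polys:
  assumes K: "number_field K" and "u1 \<in> K" "u2 \<in> K" "u3 \<in> K" "t \<in> K"
  shows "poly (huff_denom u1 u2 u3) t \<in> K" "poly (huff_a_poly u1 u2 u3) t \<in> K"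
    "poly (huff_b_poly u1 u2 u3) t \<in> K"
proof -
  note closed = number_field_add[OF K] number_field_mult[OF K] number_field_uminus[OF K]
    number_field_divide[OF K] number_field_power[OF K] number_field_one[OF K]
    number_field_zero[OF K]
  have "2 \<in> K" using number_field_of_nat[OF K, of 2] by simp
  have coeffs: "\<And>i. coeff (huff_denom u1 u2 u3) i \<in> K"
    "\<And>i. coeff [:(u1+u2+u3) / (u1*u2*u3), -1:] i \<in> K"
    "\<And>i. coeff (huff_b_poly u1 u2 u3) i \<in> K"
    unfolding huff_denom_def huff_b_poly_def
    by (intro number_field_coeff_pCons[OF K] closed assms \<open>2 \<in> K\<close>
        | simp add: number_field_zero[OF K])+
  show "poly (huff_denom u1 u2 u3) t \<in> K" "poly (huff_b_poly u1 u2 u3) t \<in> K"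
    using number_field_poly[OF K coeffs(1) \<open>t \<in> K\<close>] number_field_poly[OF K coeffs(3) \<open>t \<in> K\<close>] .
  show "poly (huff_a_poly u1 u2 u3) t \<in> K"
    unfolding huff_a_poly_def poly_mult
    by (intro number_field_mult[OF K] number_field_poly[OF K] coeffs \<open>t \<in> K\<close>)
qed

lemma huff_polys_curve_through:
  assumes K: "number_field K" and u: "u1 \<in> K" "u2 \<in> K" "u3 \<in> K"
    and "distinct [0, u1, u2, u3]" and "t \<in> K"
    and generic: "poly (huff_denom u1 u2 u3 * huff_a_poly u1 u2 u3 * huff_b_poly u1 u2 u3
                        * (huff_a_poly u1 u2 u3 - huff_b_poly u1 u2 u3)) t \<noteq> 0"
  defines "a \<equiv> poly (huff_a_poly u1 u2 u3) t" and "b \<equiv> poly (huff_b_poly u1 u2 u3) t"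
  shows "a \<in> K" "b \<in> K" "a * b * (a - b) \<noteq> 0"
    and "\<forall>u \<in> {0, u1, u2, u3}. \<exists>y \<in> K. on_huff a b u y"
proof -
  have s3: "u1*u2*u3 \<noteq> 0" using assms(5) by auto
  have D: "poly (huff_denom u1 u2 u3) t \<noteq> 0" using generic by simp
  show "a * b * (a - b) \<noteq> 0" using generic by (simp add: a_def b_def)
  show "a \<in> K" "b \<in> K"
    using number_field_huff_polys[OF K u \<open>t \<in> K\<close>] by (simp_all add: a_def b_def)
  show "\<forall>u \<in> {0, u1, u2, u3}. \<exists>y \<in> K. on_huff a b u y"
  proof
    fix u assume "u \<in> {0, u1, u2, u3}"
    then consider "u = 0" | "u \<in> K" "(u - u1) * (u - u2) * (u - u3) = 0"
      using u by auto
    then show "\<exists>y \<in> K. on_huff a b u y"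
    proof cases
      case 1
      then show ?thesis using on_huff_origin number_field_zero[OF K] by blast
    next
      case 2
      have "(u - t * (u1*u2*u3)) / poly (huff_denom u1 u2 u3) t \<in> K"
        using number_field_huff_polys[OF K u \<open>t \<in> K\<close>] 2(1) u \<open>t \<in> K\<close>
        by (intro number_field_divide[OF K] number_field_diff[OF K] number_field_mult[OF K])
      then show ?thesis
        using on_huff_huff_polys[OF s3 D 2(2)] unfolding a_def b_def by blast
    qed
  qed
qed

theorem theorem4:
  fixes K :: "complex set" and u1 u2 u3 :: complex
  assumes "number_field K"
    and "u1 \<in> K" "u2 \<in> K" "u3 \<in> K"
    and "distinct [0, u1, u2, u3]"
  shows "infinite {(a, b). a \<in> K \<and> b \<in> K \<and> a * b * (a - b) \<noteq> 0 \<and>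
           (\<forall>u \<in> {0, u1, u2, u3}. \<exists>y \<in> K. on_huff a b u y)}"
proof -
  define S where "S = {(a, b). a \<in> K \<and> b \<in> K \<and> a * b * (a - b) \<noteq> 0 \<and>
           (\<forall>u \<in> {0, u1, u2, u3}. \<exists>y \<in> K. on_huff a b u y)}"
  define P where "P = huff_denom u1 u2 u3 * huff_a_poly u1 u2 u3 * huff_b_poly u1 u2 u3
                        * (huff_a_poly u1 u2 u3 - huff_b_poly u1 u2 u3)"
  define g :: "nat \<Rightarrow> complex \<times> complex" where
    "g n = (poly (huff_a_poly u1 u2 u3) (of_nat n), poly (huff_b_poly u1 u2 u3) (of_nat n))" for n
  have "inj g" by (auto simp: inj_on_def g_def huff_b_poly_def)
  have "g n \<in> S" if "poly P (of_nat n) \<noteq> 0" for n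
    using huff_polys_curve_through[OF assms number_field_of_nat[OF assms(1)]] that
    unfolding g_def P_def S_def by blast
  then have "{n. g n \<notin> S} \<subseteq> {n. poly P (of_nat n) = 0}" by blast
  moreover have "P \<noteq> 0" using huff_polys_nonzero assms(5) unfolding P_def by auto
  ultimately have "finite {n. g n \<notin> S}" using finite_nat_roots finite_subset by blast
  with \<open>inj g\<close> have "infinite S" by (rule infinite_if_cofinitely_many_nat)
  then show ?thesis unfolding S_def .
qed

end
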